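(* Let $s<-s^{neg}$ and suppose $m\in P\cap\mathbb Z^n$ lies in a negative-definite island $U$ of $g_s$. Then the pointwise norm of $\sigma^m_s$, which is $\mathbb T^n$-invariant and hence a function of $x$, is minimized at $m$ and is strictly increasing along each ray emanating from $m$, from $m$ up to the point where the ray meets the boundary of $U$.
   Context: Let $P=\{x\in\mathbb R^n:\ell_j(x)=\langle\nu_j,x\rangle+\lambda_j\ge0,\ j=1,\dots,r\}$ be a Delzant polytope with interior $\check P$, $(X_P,\omega)$ the associated compact symplectic toric manifold with action-angle coordinates $(x,\theta)$ on $\check X_P\cong\check P\times\mathbb T^n$, $\omega=\sum dx^j\wedge d\theta_j$. $L$ is a Hermitian prequantum line bundle with unitary trivialization $\mathbbm1$ over $\check X_P$ and $\nabla\mathbbm1=-i\sum x^jd\theta_j\mathbbm1$. Let $g_P=\frac12\sum\ell_j\log\ell_j$, $\psi\in C^\infty(P)$ strongly convex (positive definite Hessian on $P$), $g_s=g_P+s\psi$ with Hessian $H_s$ and $y_s=\partial g_s/\partial x$. The polarized section $\sigma^m_s$ is given on $\check X_P$ by $\sigma^m_s=e^{m\cdot(y_s+i\theta)}e^{-(x\cdot y_s-g_s)}\mathbbm1$, so its pointwise norm is $|\sigma^m_s|=e^{(m-x)\cdot y_s+g_s}$. A negative-definite island of $g_s$ is a connected component of $\{x\in\check P:H_s(x)\text{ negative definite}\}$. $s^{cvx}\ge0$ denotes the smallest number such that $g_s$ is convex on $\check P$ for all $s>-s^{cvx}$, and $s^{neg}\ge s^{cvx}$ the smallest number such that for all $s<-s^{neg}$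 the function $g_s$ has a nonempty negative-definite island. *)

theory Defs
  imports "HOL-Analysis.Analysis"
begin

text \<open>Points of R^n are vectors real^'n for a finite index type 'n (n = CARD('n)).
  The polytope is given by r affine functions l_j(x) = nu_j . x + lam_j, j < r.\<close>

definition aff :: "(nat \<Rightarrow> real^'n) \<Rightarrow> (nat \<Rightarrow> real) \<Rightarrow> nat \<Rightarrow> real^'n \<Rightarrow> real" where
  "aff nu lam j x = inner (nu j) x + lam j"

definition polytope_P :: "(nat \<Rightarrow> real^'n) \<Rightarrow> (nat \<Rightarrow> real) \<Rightarrow> nat \<Rightarrow> (real^'n) set" where
  "polytope_P nu lam r = {x. \<forall>j<r. aff nu lam j x \<ge> 0}"

definition int_vec :: "real^'n \<Rightarrow> bool" where
  "int_vec v \<longleftrightarrow> (\<forall>i. v $ i \<in> \<int>)"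

text \<open>Delzant condition: P is bounded with nonempty interior, the normals are integral,
  every inequality cuts out a facet, and at every vertex exactly n facets meet whose
  normals form a Z-basis of Z^n.\<close>
definition delzant :: "(nat \<Rightarrow> real^'n) \<Rightarrow> (nat \<Rightarrow> real) \<Rightarrow> nat \<Rightarrow> bool" where
  "delzant nu lam r \<longleftrightarrow>
     bounded (polytope_P nu lam r) \<and> interior (polytope_P nu lam r) \<noteq> {} \<and>
     (\<forall>j<r. int_vec (nu j)) \<and>
     (\<forall>j<r. \<exists>x\<in>polytope_P nu lam r. aff nu lam j x = 0 \<and>
              (\<forall>k<r. k \<noteq> j \<longrightarrow> aff nu lam k x > 0)) \<and>
     (\<forall>v. v extreme_point_of (polytope_P nu lam r) \<longrightarrow>
        (let J = {j. j < r \<and> aff nu lam j v = 0} in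
          card J = CARD('n) \<and>
          (\<forall>z::real^'n. int_vec z \<longrightarrow>
             (\<exists>c::nat \<Rightarrow> int. z = (\<Sum>j\<in>J. of_int (c j) *\<^sub>R nu j)))))"

definition grad :: "(real^'n \<Rightarrow> real) \<Rightarrow> real^'n \<Rightarrow> real^'n" where
  "grad f x = (\<chi> i. frechet_derivative f (at x) (axis i 1))"

definition hess :: "(real^'n \<Rightarrow> real) \<Rightarrow> real^'n \<Rightarrow> real^'n^'n" where
  "hess f x = (\<chi> i j. frechet_derivative (\<lambda>z. grad f z $ i) (at x) (axis j 1))"

definition pos_def :: "real^'n^'n \<Rightarrow> bool" where
  "pos_def A \<longleftrightarrow> (\<forall>v. v \<noteq> 0 \<longrightarrow> inner v (A *v v) > 0)"

definition neg_def :: "real^'n^'n \<Rightarrow> bool" where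
  "neg_def A \<longleftrightarrow> (\<forall>v. v \<noteq> 0 \<longrightarrow> inner v (A *v v) < 0)"

text \<open>C^infinity on an open set: all iterated partial derivatives exist (are differentiable).\<close>
definition partial :: "(real^'n \<Rightarrow> real) \<Rightarrow> 'n \<Rightarrow> real^'n \<Rightarrow> real" where
  "partial f i = (\<lambda>x. frechet_derivative f (at x) (axis i 1))"

definition smooth_on :: "(real^'n) set \<Rightarrow> (real^'n \<Rightarrow> real) \<Rightarrow> bool" where
  "smooth_on S f \<longleftrightarrow> (\<forall>is :: 'n list. (fold (\<lambda>i h. partial h i) is f) differentiable_on S)"

definition smooth_on_closed :: "(real^'n) set \<Rightarrow> (real^'n \<Rightarrow> real) \<Rightarrow> bool" where
  "smooth_on_closed P f \<longleftrightarrow> (\<exists>S. open S \<and> P \<subseteq> S \<and> smooth_on S f)"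

definition gP :: "(nat \<Rightarrow> real^'n) \<Rightarrow> (nat \<Rightarrow> real) \<Rightarrow> nat \<Rightarrow> real^'n \<Rightarrow> real" where
  "gP nu lam r x = (1/2) * (\<Sum>j<r. aff nu lam j x * ln (aff nu lam j x))"

definition gs :: "(nat \<Rightarrow> real^'n) \<Rightarrow> (nat \<Rightarrow> real) \<Rightarrow> nat \<Rightarrow> (real^'n \<Rightarrow> real) \<Rightarrow> real \<Rightarrow> real^'n \<Rightarrow> real" where
  "gs nu lam r psi s x = gP nu lam r x + s * psi x"

definition negdef_set where
  "negdef_set nu lam r psi s =
     {x \<in> interior (polytope_P nu lam r). neg_def (hess (gs nu lam r psi s) x)}"

definition island where
  "island nu lam r psi s U \<longleftrightarrow>
     (\<exists>x\<in>negdef_set nu lam r psi s. U = connected_component_set (negdef_set nu lam r psi s) x)"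

definition s_cvx where
  "s_cvx nu lam r psi = Inf {a::real. 0 \<le> a \<and>
      (\<forall>s. s > -a \<longrightarrow> convex_on (interior (polytope_P nu lam r)) (gs nu lam r psi s))}"

definition s_neg where
  "s_neg nu lam r psi = Inf {a::real. s_cvx nu lam r psi \<le> a \<and>
      (\<forall>s. s < -a \<longrightarrow> (\<exists>U. island nu lam r psi s U \<and> U \<noteq> {}))}"

definition sec_norm where
  "sec_norm nu lam r psi s (m::real^'n) x =
     exp (inner (m - x) (grad (gs nu lam r psi s) x) + gs nu lam r psi s x)"

end

theory Submission
  imports Defs
begin

text \<open>Write \<open>T x = g x + \<langle>m - x, \<nabla>g x\<rangle>\<close> for the value at \<open>m\<close> of the tangent hyperplane to the
  graph of \<open>g = g\<^sub>s\<close> at \<open>x\<close>; the norm of \<open>\<sigma>\<^sup>m\<^sub>s\<close> is \<open>exp (T x)\<close>. Along the ray \<open>x = m + t v\<close>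
  one computes \<open>d/dt T(m + t v) = -t \<langle>v, H\<^sub>s(m + t v) v\<rangle>\<close>, the first-order terms cancelling.
  On a negative-definite island this is positive for \<open>t > 0\<close>, so \<open>T\<close>, and with it the norm,
  increases strictly along every ray from \<open>m\<close> as long as the ray stays in the island.\<close>

definition tangent_value :: "(real^'n \<Rightarrow> real) \<Rightarrow> real^'n \<Rightarrow> real^'n \<Rightarrow> real" where
  "tangent_value g m x = g x + inner (m - x) (grad g x)"

lemma sec_norm_eq_exp_tangent_value:
  "sec_norm nu lam r psi s m x = exp (tangent_value (gs nu lam r psi s) m x)"
  by (simp add: sec_norm_def tangent_value_def add.commute)

lemma has_derivative_grad:
  fixes f :: "real^'n \<Rightarrow> real"
  assumes "f differentiable (at x)"
  shows "(f has_derivative (\<lambda>h. inner (grad f x) h)) (at x)"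
proof -
  let ?D = "frechet_derivative f (at x)"
  have D: "(f has_derivative ?D) (at x)"
    using assms frechet_derivative_works by blast
  then have "linear ?D"
    using has_derivative_linear by blast
  have "?D h = inner (grad f x) h" for h
  proof -
    have "?D h = ?D (\<Sum>i\<in>UNIV. h $ i *\<^sub>R axis i 1)"
      by (metis (no_types) basis_expansion scalar_mult_eq_scaleR)
    also have "\<dots> = (\<Sum>i\<in>UNIV. h $ i * ?D (axis i 1))"
      using \<open>linear ?D\<close> by (simp add: linear_sum linear_scale)
    also have "\<dots> = inner (grad f x) h"
      by (simp add: grad_def inner_vec_def mult.commute)
    finally show ?thesis .
  qed
  with D show ?thesis
    by (metis (no_types, lifting) ext)
qed

lemma hess_row_eq_grad: "hess g x $ i = grad (\<lambda>z. grad g z $ i) x"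
  by (simp add: hess_def grad_def vec_eq_iff)

lemma has_real_derivative_along_ray:
  fixes f :: "real^'n \<Rightarrow> real"
  assumes "f differentiable (at (m + t *\<^sub>R v))"
  shows "((\<lambda>t. f (m + t *\<^sub>R v)) has_real_derivative inner (grad f (m + t *\<^sub>R v)) v) (at t)"
proof -
  have "((\<lambda>t. m + t *\<^sub>R v) has_derivative (\<lambda>h. h *\<^sub>R v)) (at t)"
    by (auto intro!: derivative_eq_intros)
  from has_derivative_compose[OF this has_derivative_grad[OF assms]]
  show ?thesis
    by (simp add: has_field_derivative_def mult_commute_abs)
qed

lemma tangent_value_along_ray_has_derivative:
  fixes g :: "real^'n \<Rightarrow> real"
  assumes g: "g differentiable (at (m + t *\<^sub>R v))"
    and grad_g: "\<And>i. (\<lambda>z. grad g z $ i) differentiable (at (m + t *\<^sub>R v))"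
  shows "((\<lambda>t. tangent_value g m (m + t *\<^sub>R v))
          has_real_derivative - (t * inner v (hess g (m + t *\<^sub>R v) *v v))) (at t)"
proof -
  let ?x = "\<lambda>t. m + t *\<^sub>R v"
  have T: "tangent_value g m (?x t) = g (?x t) - t * (\<Sum>i\<in>UNIV. v $ i * grad g (?x t) $ i)" for t
    by (simp add: tangent_value_def inner_vec_def sum_distrib_left sum_negf mult.assoc)
  have "((\<lambda>t. grad g (?x t) $ i) has_real_derivative inner (hess g (?x t) $ i) v) (at t)" for i
    using has_real_derivative_along_ray[OF grad_g] by (simp add: hess_row_eq_grad)
  then have "((\<lambda>t. \<Sum>i\<in>UNIV. v $ i * grad g (?x t) $ i) has_real_derivative
      (\<Sum>i\<in>UNIV. v $ i * inner (hess g (?x t) $ i) v)) (at t)"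
    by (intro DERIV_sum DERIV_cmult)
  from DERIV_diff[OF has_real_derivative_along_ray[OF g] DERIV_mult[OF DERIV_ident this]]
  have "((\<lambda>t. tangent_value g m (?x t)) has_real_derivative
      inner (grad g (?x t)) v - (1 * (\<Sum>i\<in>UNIV. v $ i * grad g (?x t) $ i)
        + (\<Sum>i\<in>UNIV. v $ i * inner (hess g (?x t) $ i) v) * t)) (at t)"
    unfolding T .
  moreover have "inner (grad g (?x t)) v - (1 * (\<Sum>i\<in>UNIV. v $ i * grad g (?x t) $ i)
        + (\<Sum>i\<in>UNIV. v $ i * inner (hess g (?x t) $ i) v) * t)
      = - (t * inner v (hess g (?x t) *v v))"
    by (simp add: inner_vec_def matrix_vector_mult_def sum_distrib_left mult_ac)
  ultimately show ?thesis
    by simp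
qed

lemma tangent_value_strict_mono_along_ray:
  fixes g :: "real^'n \<Rightarrow> real"
  assumes g: "\<And>t. t \<in> {0..t2} \<Longrightarrow> g differentiable (at (m + t *\<^sub>R v))"
    and grad_g: "\<And>t i. t \<in> {0..t2} \<Longrightarrow> (\<lambda>z. grad g z $ i) differentiable (at (m + t *\<^sub>R v))"
    and neg: "\<And>t. t \<in> {0..t2} \<Longrightarrow> neg_def (hess g (m + t *\<^sub>R v))"
    and "v \<noteq> 0" "0 \<le> t1" "t1 < t2"
  shows "tangent_value g m (m + t1 *\<^sub>R v) < tangent_value g m (m + t2 *\<^sub>R v)"
proof -
  let ?T = "\<lambda>t. tangent_value g m (m + t *\<^sub>R v)"
  have T': "(?T has_real_derivative - (t * inner v (hess g (m + t *\<^sub>R v) *v v))) (at t)"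
    if "t \<in> {0..t2}" for t
    using tangent_value_along_ray_has_derivative[OF g[OF that] grad_g[OF that]] .
  show ?thesis
  proof (rule DERIV_pos_imp_increasing_open[OF \<open>t1 < t2\<close>])
    fix t assume t: "t1 < t" "t < t2"
    then have "t \<in> {0..t2}" "t > 0"
      using \<open>0 \<le> t1\<close> by auto
    moreover from neg[OF this(1)] have "inner v (hess g (m + t *\<^sub>R v) *v v) < 0"
      using \<open>v \<noteq> 0\<close> by (simp add: neg_def_def)
    ultimately show "\<exists>y. (?T has_real_derivative y) (at t) \<and> 0 < y"
      using T' by (meson mult_pos_neg neg_0_less_iff_less)
  next
    have "isCont ?T t" if "t \<in> {t1..t2}" for t
      using that \<open>0 \<le> t1\<close> by (intro DERIV_isCont[OF T']) auto
    then show "continuous_on {t1..t2} ?T"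
      by (simp add: continuous_at_imp_continuous_on)
  qed
qed

lemma affine_pos_on_interior:
  fixes a :: "'a::real_inner"
  assumes "\<forall>y\<in>S. inner a y + b \<ge> 0" "a \<noteq> 0" "x \<in> interior S"
  shows "inner a x + b > 0"
proof -
  obtain e where "e > 0" "ball x e \<subseteq> S"
    using assms(3) by (meson mem_interior)
  define y where "y = x - (e / 2 / norm a) *\<^sub>R a"
  have "dist x y = e / 2"
    using \<open>e > 0\<close> \<open>a \<noteq> 0\<close> by (simp add: y_def dist_norm)
  then have "y \<in> S"
    using \<open>e > 0\<close> \<open>ball x e \<subseteq> S\<close> by (simp add: subset_iff)
  then have "inner a y + b \<ge> 0"
    using assms(1) by blast
  moreover have "inner a y = inner a x - e / 2 * norm a"
    using \<open>a \<noteq> 0\<close> by (simp add: y_def inner_diff_right power2_norm_eq_inner[symmetric] power2_eq_square)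
  moreover have "e / 2 * norm a > 0"
    using \<open>e > 0\<close> \<open>a \<noteq> 0\<close> by simp
  ultimately show ?thesis
    by linarith
qed

lemma aff_pos_on_interior:
  assumes "x \<in> interior (polytope_P nu lam r)" "j < r" "nu j \<noteq> 0"
  shows "aff nu lam j x > 0"
  using affine_pos_on_interior[of "polytope_P nu lam r" "nu j" "lam j" x] assms
  by (auto simp: polytope_P_def aff_def)

lemma has_derivative_aff: "(aff nu lam j has_derivative (\<lambda>h. inner (nu j) h)) F"
  unfolding aff_def by (auto intro!: derivative_eq_intros)

text \<open>A facet normal \<open>\<nu>\<^sub>j = 0\<close> is not excluded by the hypotheses; then \<open>\<ell>\<^sub>j\<close> is constant and
  \<open>\<ell>\<^sub>j log \<ell>\<^sub>j\<close> is smooth whatever the sign of the constant.\<close>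

lemma has_derivative_aff_xlnx:
  assumes "x \<in> interior (polytope_P nu lam r)" "j < r"
  shows "((\<lambda>z. aff nu lam j z * ln (aff nu lam j z)) has_derivative
           (\<lambda>h. inner (nu j) h * (ln (aff nu lam j x) + 1))) (at x)"
proof (cases "nu j = 0")
  case True
  then show ?thesis
    by (simp add: aff_def)
next
  case False
  then have pos: "aff nu lam j x > 0"
    using aff_pos_on_interior assms by blast
  have "((\<lambda>z. aff nu lam j z * ln (aff nu lam j z)) has_derivative
      (\<lambda>h. aff nu lam j x * (inner (nu j) h * inverse (aff nu lam j x))
           + inner (nu j) h * ln (aff nu lam j x))) (at x)"
    by (rule has_derivative_mult[OF has_derivative_aff has_derivative_ln[OF pos has_derivative_aff]])
  then show ?thesis
    using pos by (simp add: field_simps)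
qed

lemma differentiable_ln_aff_term:
  assumes "x \<in> interior (polytope_P nu lam r)" "j < r"
  shows "(\<lambda>z. c * (ln (aff nu lam j z) + 1)) differentiable (at x)"
proof (cases "nu j = 0")
  case True
  then show ?thesis
    by (simp add: aff_def)
next
  case False
  then have "aff nu lam j x > 0"
    using aff_pos_on_interior assms by blast
  from has_derivative_ln[OF this has_derivative_aff] show ?thesis
    by (intro differentiable_mult differentiable_add differentiable_const)
      (auto simp: differentiable_def)
qed

lemma smooth_on_differentiable_at:
  assumes "smooth_on S f" "open S" "x \<in> S"
  shows "f differentiable (at x)" "partial f i differentiable (at x)"
proof -
  have "(fold (\<lambda>i h. partial h i) [] f) differentiable_on S"
    "(fold (\<lambda>i h. partial h i) [i] f) differentiable_on S"
    using assms(1) smooth_on_def by blast+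
  then show "f differentiable (at x)" "partial f i differentiable (at x)"
    using assms(2,3) by (simp_all add: differentiable_on_eq_differentiable_at)
qed

lemma gs_has_derivative:
  assumes "x \<in> interior (polytope_P nu lam r)" "psi differentiable (at x)"
  shows "(gs nu lam r psi s has_derivative
      (\<lambda>h. 1/2 * (\<Sum>j<r. inner (nu j) h * (ln (aff nu lam j x) + 1))
           + s * frechet_derivative psi (at x) h)) (at x)"
  unfolding gs_def[abs_def] gP_def[abs_def]
  by (intro has_derivative_add has_derivative_mult_right has_derivative_sum
      has_derivative_aff_xlnx[OF assms(1)] frechet_derivative_works[THEN iffD1, OF assms(2)])
    simp

lemma grad_gs_component:
  assumes "x \<in> interior (polytope_P nu lam r)" "psi differentiable (at x)"
  shows "grad (gs nu lam r psi s) x $ i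
    = 1/2 * (\<Sum>j<r. nu j $ i * (ln (aff nu lam j x) + 1)) + s * partial psi i x"
  using frechet_derivative_at[OF gs_has_derivative[OF assms], symmetric]
  by (simp add: grad_def inner_axis partial_def)

lemma
  assumes "smooth_on S psi" "open S" "polytope_P nu lam r \<subseteq> S"
    and x: "x \<in> interior (polytope_P nu lam r)"
  shows gs_differentiable_on_interior: "gs nu lam r psi s differentiable (at x)"
    and grad_gs_differentiable_on_interior:
      "(\<lambda>z. grad (gs nu lam r psi s) z $ i) differentiable (at x)"
proof -
  have psi: "psi differentiable (at z)" "partial psi i differentiable (at z)"
    if "z \<in> interior (polytope_P nu lam r)" for z
    using smooth_on_differentiable_at[OF assms(1,2)] that assms(3) interior_subset by blast+
  show "gs nu lam r psi s differentiable (at x)"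
    using gs_has_derivative[OF x psi(1)[OF x]] by (auto simp: differentiable_def)
  have "(\<lambda>z. 1/2 * (\<Sum>j<r. nu j $ i * (ln (aff nu lam j z) + 1)) + s * partial psi i z)
      differentiable (at x)"
    using psi(2)[OF x] differentiable_ln_aff_term[OF x]
    by (intro differentiable_add differentiable_mult differentiable_sum differentiable_const) auto
  then obtain D where "((\<lambda>z. 1/2 * (\<Sum>j<r. nu j $ i * (ln (aff nu lam j z) + 1))
      + s * partial psi i z) has_derivative D) (at x)"
    by (auto simp: differentiable_def)
  then have "((\<lambda>z. grad (gs nu lam r psi s) z $ i) has_derivative D) (at x)"
    by (rule has_derivative_transform_within_open[OF _ open_interior x])
      (simp add: grad_gs_component psi)
  then show "(\<lambda>z. grad (gs nu lam r psi s) z $ i) differentiable (at x)"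
    by (auto simp: differentiable_def)
qed

lemma island_subset_negdef_set:
  assumes "island nu lam r psi s U"
  shows "U \<subseteq> negdef_set nu lam r psi s"
  using assms connected_component_subset by (auto simp: island_def)

theorem mainTheorem12:
  fixes nu :: "nat \<Rightarrow> real^'n" and lam :: "nat \<Rightarrow> real" and r :: nat
    and psi :: "real^'n \<Rightarrow> real" and s :: real and m :: "real^'n" and U :: "(real^'n) set"
  assumes "delzant nu lam r"
    and "smooth_on_closed (polytope_P nu lam r) psi"
    and "\<forall>x\<in>polytope_P nu lam r. pos_def (hess psi x)"
    and "s < - s_neg nu lam r psi"
    and "m \<in> polytope_P nu lam r" and "int_vec m"
    and "island nu lam r psi s U" and "m \<in> U"
  shows "(\<forall>x. closed_segment m x \<subseteq> U \<longrightarrow> sec_norm nu lam r psi s m m \<le> sec_norm nu lam r psi s m x)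
       \<and> (\<forall>v t1 t2. v \<noteq> 0 \<longrightarrow> 0 \<le> t1 \<longrightarrow> t1 < t2 \<longrightarrow> (\<forall>t\<in>{0..t2}. m + t *\<^sub>R v \<in> U) \<longrightarrow>
             sec_norm nu lam r psi s m (m + t1 *\<^sub>R v) < sec_norm nu lam r psi s m (m + t2 *\<^sub>R v))"
proof -
  obtain S where S: "open S" "polytope_P nu lam r \<subseteq> S" "smooth_on S psi"
    using assms(2) smooth_on_closed_def by blast
  have U: "x \<in> interior (polytope_P nu lam r)" "neg_def (hess (gs nu lam r psi s) x)"
    if "x \<in> U" for x
    using island_subset_negdef_set[OF assms(7)] that by (auto simp: negdef_set_def)
  have mono: "sec_norm nu lam r psi s m (m + t1 *\<^sub>R v) < sec_norm nu lam r psi s m (m + t2 *\<^sub>R v)"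
    if "v \<noteq> 0" "0 \<le> t1" "t1 < t2" "\<forall>t\<in>{0..t2}. m + t *\<^sub>R v \<in> U" for v t1 t2
    unfolding sec_norm_eq_exp_tangent_value exp_less_cancel_iff
    using that U gs_differentiable_on_interior[OF S(3,1,2)]
      grad_gs_differentiable_on_interior[OF S(3,1,2)]
    by (intro tangent_value_strict_mono_along_ray) auto
  have "sec_norm nu lam r psi s m m \<le> sec_norm nu lam r psi s m x"
    if "closed_segment m x \<subseteq> U" for x
  proof (cases "x = m")
    case False
    have "m + t *\<^sub>R (x - m) \<in> closed_segment m x" if "t \<in> {0..1}" for t :: real
      using that by (auto simp: closed_segment_def algebra_simps intro!: exI[of _ t])
    with mono[of "x - m" 0 1] False \<open>closed_segment m x \<subseteq> U\<close> show ?thesis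
      by fastforce
  qed simp
  with mono show ?thesis
    by blast
qed

end
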